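(* Let $G=(V,E)$ be an undirected graph with capacities $c\colon E\to\mathbb{Z}_{>0}$ and lower bounds $\ell\colon E\to\mathbb{Z}_{\ge0}$ with $\ell(e)\le c(e)$. Let $G^2$ be the multigraph obtained by replacing each edge $e=uv$ by one "heavy" edge $uv$ of weight $(c(e)+\ell(e))/2$ and $c(e)-\ell(e)$ "light" edges $uv$ of weight $1/2$. Then there exist an orientation of $G$ and an integer circulation $f$ on the resulting directed graph with $\ell(a)\le f(a)\le c(a)$ for every arc $a$ if and only if $G^2$ has an orientation in which, for every vertex, the total weight of incoming edges equals the total weight of outgoing edges.
   Context: A circulation on a directed graph is a function $f$ on arcs with nonnegative values such that at every vertex the total inflow equals the total outflow. An orientation chooses a direction for each edge (of a multigraph, each parallel edge separately). *)

theory Defs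
  imports Complex_Main
begin

text \<open>An undirected multigraph is given by a vertex set V, an edge index set E and
  a map ends assigning to each edge its two endpoints (listed in an arbitrary
  reference order).\<close>

definition otail :: "('e \<Rightarrow> 'v \<times> 'v) \<Rightarrow> ('e \<Rightarrow> bool) \<Rightarrow> 'e \<Rightarrow> 'v" where
  "otail ends ori e = (if ori e then fst (ends e) else snd (ends e))"

definition ohead :: "('e \<Rightarrow> 'v \<times> 'v) \<Rightarrow> ('e \<Rightarrow> bool) \<Rightarrow> 'e \<Rightarrow> 'v" where
  "ohead ends ori e = (if ori e then snd (ends e) else fst (ends e))"

definition undirected_multigraph :: "'v set \<Rightarrow> 'e set \<Rightarrow> ('e \<Rightarrow> 'v \<times> 'v) \<Rightarrow> bool" where
  "undirected_multigraph V E ends \<longleftrightarrow> finite V \<and> finite E \<and>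
     (\<forall>e\<in>E. fst (ends e) \<in> V \<and> snd (ends e) \<in> V)"

definition is_circulation ::
  "'v set \<Rightarrow> 'e set \<Rightarrow> ('e \<Rightarrow> 'v) \<Rightarrow> ('e \<Rightarrow> 'v) \<Rightarrow> ('e \<Rightarrow> 'a::ordered_comm_monoid_add) \<Rightarrow> bool" where
  "is_circulation V E tlf hdf f \<longleftrightarrow> (\<forall>a\<in>E. 0 \<le> f a) \<and>
     (\<forall>v\<in>V. (\<Sum>a\<in>{a\<in>E. hdf a = v}. f a) = (\<Sum>a\<in>{a\<in>E. tlf a = v}. f a))"

text \<open>The multigraph G^2: edge (e, None) is the heavy copy of e, edges (e, Some i)
  with i < c e - l e are the light copies.\<close>
definition sq_edges :: "'e set \<Rightarrow> ('e \<Rightarrow> int) \<Rightarrow> ('e \<Rightarrow> int) \<Rightarrow> ('e \<times> nat option) set" where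
  "sq_edges E c l = {(e, None) | e. e \<in> E} \<union> {(e, Some i) | e i. e \<in> E \<and> int i < c e - l e}"

definition sq_ends :: "('e \<Rightarrow> 'v \<times> 'v) \<Rightarrow> ('e \<times> nat option) \<Rightarrow> 'v \<times> 'v" where
  "sq_ends ends x = ends (fst x)"

definition sq_weight :: "('e \<Rightarrow> int) \<Rightarrow> ('e \<Rightarrow> int) \<Rightarrow> ('e \<times> nat option) \<Rightarrow> real" where
  "sq_weight c l x = (case snd x of None \<Rightarrow> (real_of_int (c (fst x)) + real_of_int (l (fst x))) / 2
                                   | Some _ \<Rightarrow> 1 / 2)"

definition balanced_orientation ::
  "'v set \<Rightarrow> 'x set \<Rightarrow> ('x \<Rightarrow> 'v \<times> 'v) \<Rightarrow> ('x \<Rightarrow> real) \<Rightarrow> ('x \<Rightarrow> bool) \<Rightarrow> bool" where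
  "balanced_orientation V X ends w ori \<longleftrightarrow>
     (\<forall>v\<in>V. (\<Sum>x\<in>{x\<in>X. ohead ends ori x = v}. w x) = (\<Sum>x\<in>{x\<in>X. otail ends ori x = v}. w x))"

end

theory Submission
  imports Defs
begin

text \<open>Under an orientation of G^2 let the heavy copy of e fix an orientation of e, and let
  k of the c(e) - l(e) light copies point the same way.  The net weight e sends through its
  head is then (c + l)/2 + k/2 - (c - l - k)/2 = l + k, an integer in [l, c].  Hence balanced
  orientations of G^2 correspond to orientations of G carrying the circulation l + k, and
  conversely a circulation f is realised by letting exactly f(e) - l(e) light copies agree.\<close>

definition signed_incidence :: "('x \<Rightarrow> 'v \<times> 'v) \<Rightarrow> ('x \<Rightarrow> bool) \<Rightarrow> 'x \<Rightarrow> 'v \<Rightarrow> real" where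
  "signed_incidence ends ori x v =
     (if ohead ends ori x = v then 1 else 0) - (if otail ends ori x = v then 1 else 0)"

lemma inflow_minus_outflow:
  assumes "finite X"
  shows "(\<Sum>x\<in>{x\<in>X. ohead ends ori x = v}. w x) - (\<Sum>x\<in>{x\<in>X. otail ends ori x = v}. w x)
         = (\<Sum>x\<in>X. w x * signed_incidence ends ori x v)"
  using assms
  by (simp add: sum.inter_filter sum_subtractf[symmetric])
     (rule sum.cong, auto simp: signed_incidence_def)

lemma balanced_orientation_iff_signed_sum:
  assumes "finite X"
  shows "balanced_orientation V X ends w ori \<longleftrightarrow>
         (\<forall>v\<in>V. (\<Sum>x\<in>X. w x * signed_incidence ends ori x v) = 0)"
  unfolding balanced_orientation_def inflow_minus_outflow[OF assms, symmetric]
  by (simp only: right_minus_eq)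

lemma balanced_orientation_cong:
  assumes "\<And>x. x \<in> X \<Longrightarrow> w x = w' x"
  shows "balanced_orientation V X ends w ori \<longleftrightarrow> balanced_orientation V X ends w' ori"
proof -
  have "(\<Sum>x\<in>{x\<in>X. P x}. w x) = (\<Sum>x\<in>{x\<in>X. P x}. w' x)" for P
    using assms by (intro sum.cong) auto
  then show ?thesis unfolding balanced_orientation_def by simp
qed

lemma is_circulation_iff_balanced:
  fixes f :: "'e \<Rightarrow> int"
  shows "is_circulation V E (otail ends ori) (ohead ends ori) f \<longleftrightarrow>
         (\<forall>e\<in>E. 0 \<le> f e) \<and> balanced_orientation V E ends (\<lambda>e. of_int (f e)) ori"
  unfolding is_circulation_def balanced_orientation_def
  by (simp flip: of_int_sum)

lemma sq_edges_eq:
  "sq_edges E c l = (\<lambda>e. (e, None)) ` E \<union> (\<lambda>(e, i). (e, Some i)) ` (SIGMA e:E. {..<nat (c e - l e)})"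
  unfolding sq_edges_def by (auto simp: image_iff)

lemma finite_sq_edges: "finite E \<Longrightarrow> finite (sq_edges E c l)"
  unfolding sq_edges_eq by auto

lemma sum_sq_edges:
  assumes "finite E"
  shows "(\<Sum>x\<in>sq_edges E c l. h x) = (\<Sum>e\<in>E. h (e, None) + (\<Sum>i<nat (c e - l e). h (e, Some i)))"
proof -
  let ?S = "SIGMA e:E. {..<nat (c e - l e)}"
  have "(\<Sum>x\<in>sq_edges E c l. h x)
        = (\<Sum>e\<in>E. h (e, None)) + (\<Sum>p\<in>?S. h (fst p, Some (snd p)))"
    unfolding sq_edges_eq using assms
    by (subst sum.union_disjoint; force simp: sum.reindex inj_on_def case_prod_beta)
  also have "(\<Sum>p\<in>?S. h (fst p, Some (snd p))) = (\<Sum>e\<in>E. \<Sum>i<nat (c e - l e). h (e, Some i))"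
    using assms by (simp add: sum.Sigma case_prod_beta)
  finally show ?thesis by (simp add: sum.distrib)
qed

definition heavy_orientation :: "('e \<times> nat option \<Rightarrow> bool) \<Rightarrow> 'e \<Rightarrow> bool" where
  "heavy_orientation ori2 e = ori2 (e, None)"

definition agreeing_light_copies ::
  "('e \<Rightarrow> int) \<Rightarrow> ('e \<Rightarrow> int) \<Rightarrow> ('e \<times> nat option \<Rightarrow> bool) \<Rightarrow> 'e \<Rightarrow> nat" where
  "agreeing_light_copies c l ori2 e =
     card {i\<in>{..<nat (c e - l e)}. ori2 (e, Some i) = ori2 (e, None)}"

lemma signed_incidence_sq_ends:
  "signed_incidence (sq_ends ends) ori2 (e, j) v =
   (if ori2 (e, j) = ori2 (e, None) then 1 else -1) * signed_incidence ends (heavy_orientation ori2) e v"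
  unfolding signed_incidence_def ohead_def otail_def sq_ends_def heavy_orientation_def by auto

lemma sum_plus_minus_one:
  "(\<Sum>i<n. if P i then 1 else -1 :: real) = 2 * real (card {i\<in>{..<n}. P i}) - real n"
proof -
  have "(\<Sum>i<n. if P i then 1 else -1 :: real) = (\<Sum>i<n. 2 * (if P i then 1 else 0) - 1)"
    by (rule sum.cong) auto
  also have "\<dots> = 2 * (\<Sum>i<n. if P i then 1 else 0) - real n"
    by (simp add: sum_subtractf sum_distrib_left)
  finally show ?thesis
    by (simp add: sum.inter_filter[symmetric])
qed

lemma sq_net_weight_of_edge:
  assumes "l e \<le> c e"
  shows "sq_weight c l (e, None) * signed_incidence (sq_ends ends) ori2 (e, None) v
         + (\<Sum>i<nat (c e - l e). sq_weight c l (e, Some i) * signed_incidence (sq_ends ends) ori2 (e, Some i) v)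
         = of_int (l e + int (agreeing_light_copies c l ori2 e))
           * signed_incidence ends (heavy_orientation ori2) e v"
proof -
  let ?n = "nat (c e - l e)" and ?k = "agreeing_light_copies c l ori2 e"
    and ?D = "signed_incidence ends (heavy_orientation ori2) e v"
  have "(\<Sum>i<?n. sq_weight c l (e, Some i) * signed_incidence (sq_ends ends) ori2 (e, Some i) v)
        = (\<Sum>i<?n. if ori2 (e, Some i) = ori2 (e, None) then 1 else -1) * ?D / 2"
    by (simp add: signed_incidence_sq_ends sq_weight_def sum_distrib_right sum_divide_distrib)
  also have "\<dots> = (2 * real ?k - real ?n) * ?D / 2"
    by (simp add: sum_plus_minus_one agreeing_light_copies_def)
  finally show ?thesis
    using assms by (simp add: signed_incidence_sq_ends sq_weight_def field_simps)
qed

lemma balanced_sq_iff_balanced_heavy: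
  assumes "finite E" and "\<forall>e\<in>E. l e \<le> c e"
  shows "balanced_orientation V (sq_edges E c l) (sq_ends ends) (sq_weight c l) ori2 \<longleftrightarrow>
         balanced_orientation V E ends
           (\<lambda>e. of_int (l e + int (agreeing_light_copies c l ori2 e))) (heavy_orientation ori2)"
proof -
  have "(\<Sum>x\<in>sq_edges E c l. sq_weight c l x * signed_incidence (sq_ends ends) ori2 x v)
        = (\<Sum>e\<in>E. of_int (l e + int (agreeing_light_copies c l ori2 e))
                    * signed_incidence ends (heavy_orientation ori2) e v)" for v
    using assms by (simp add: sum_sq_edges sq_net_weight_of_edge)
  then show ?thesis
    using assms by (simp add: balanced_orientation_iff_signed_sum finite_sq_edges)
qed

lemma agreeing_light_copies_le:
  assumes "l e \<le> c e"
  shows "int (agreeing_light_copies c l ori2 e) \<le> c e - l e"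
proof -
  have "agreeing_light_copies c l ori2 e \<le> card {..<nat (c e - l e)}"
    unfolding agreeing_light_copies_def by (rule card_mono) auto
  then show ?thesis using assms by simp
qed

definition sq_orientation_of_flow ::
  "('e \<Rightarrow> bool) \<Rightarrow> ('e \<Rightarrow> int) \<Rightarrow> ('e \<Rightarrow> int) \<Rightarrow> 'e \<times> nat option \<Rightarrow> bool" where
  "sq_orientation_of_flow ori f l x = (case snd x of
       None \<Rightarrow> ori (fst x)
     | Some i \<Rightarrow> (int i < f (fst x) - l (fst x) \<longleftrightarrow> ori (fst x)))"

lemma heavy_orientation_sq_orientation_of_flow:
  "heavy_orientation (sq_orientation_of_flow ori f l) = ori"
  by (simp add: fun_eq_iff heavy_orientation_def sq_orientation_of_flow_def)

lemma agreeing_light_copies_sq_orientation_of_flow: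
  assumes "l e \<le> f e" and "f e \<le> c e"
  shows "l e + int (agreeing_light_copies c l (sq_orientation_of_flow ori f l) e) = f e"
proof -
  have "{i\<in>{..<nat (c e - l e)}. sq_orientation_of_flow ori f l (e, Some i)
                                  = sq_orientation_of_flow ori f l (e, None)}
        = {..<nat (f e - l e)}"
    using assms by (auto simp: sq_orientation_of_flow_def)
  then show ?thesis
    using assms by (simp add: agreeing_light_copies_def)
qed

theorem mainTheorem5:
  fixes V :: "'v set" and E :: "'e set" and ends :: "'e \<Rightarrow> 'v \<times> 'v"
    and c l :: "'e \<Rightarrow> int"
  assumes "undirected_multigraph V E ends"
    and "\<forall>e\<in>E. 0 < c e"
    and "\<forall>e\<in>E. 0 \<le> l e \<and> l e \<le> c e"
  shows "(\<exists>ori :: 'e \<Rightarrow> bool. \<exists>f :: 'e \<Rightarrow> int.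
            is_circulation V E (otail ends ori) (ohead ends ori) f \<and>
            (\<forall>e\<in>E. l e \<le> f e \<and> f e \<le> c e))
     \<longleftrightarrow> (\<exists>ori2 :: 'e \<times> nat option \<Rightarrow> bool.
            balanced_orientation V (sq_edges E c l) (sq_ends ends) (sq_weight c l) ori2)"
proof
  have fin: "finite E" using assms(1) by (simp add: undirected_multigraph_def)
  have lc: "\<forall>e\<in>E. l e \<le> c e" using assms(3) by blast
  note sq_iff = balanced_sq_iff_balanced_heavy[OF fin lc]
  show "\<exists>ori2. balanced_orientation V (sq_edges E c l) (sq_ends ends) (sq_weight c l) ori2"
    if "\<exists>ori f. is_circulation V E (otail ends ori) (ohead ends ori) f \<and> (\<forall>e\<in>E. l e \<le> f e \<and> f e \<le> c e)"
  proof -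
    from that obtain ori and f :: "'e \<Rightarrow> int"
      where circ: "is_circulation V E (otail ends ori) (ohead ends ori) f"
        and bounds: "\<forall>e\<in>E. l e \<le> f e \<and> f e \<le> c e" by blast
    let ?ori2 = "sq_orientation_of_flow ori f l"
    have "balanced_orientation V E ends (\<lambda>e. of_int (f e)) ori"
      using circ by (simp add: is_circulation_iff_balanced)
    then have "balanced_orientation V E ends
            (\<lambda>e. of_int (l e + int (agreeing_light_copies c l ?ori2 e))) (heavy_orientation ?ori2)"
      using bounds
      by (subst balanced_orientation_cong)
         (simp_all add: heavy_orientation_sq_orientation_of_flow agreeing_light_copies_sq_orientation_of_flow)
    then show ?thesis using sq_iff by blast
  qed
  show "\<exists>ori f. is_circulation V E (otail ends ori) (ohead ends ori) f \<and> (\<forall>e\<in>E. l e \<le> f e \<and> f e \<le> c e)"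
    if "\<exists>ori2. balanced_orientation V (sq_edges E c l) (sq_ends ends) (sq_weight c l) ori2"
  proof -
    from that obtain ori2
      where "balanced_orientation V (sq_edges E c l) (sq_ends ends) (sq_weight c l) ori2" by blast
    define f where "f e = l e + int (agreeing_light_copies c l ori2 e)" for e
    have bounds: "l e \<le> f e \<and> f e \<le> c e \<and> 0 \<le> f e" if "e \<in> E" for e
      using agreeing_light_copies_le[of l e c ori2] assms(3) that by (simp add: f_def)
    have "balanced_orientation V E ends (\<lambda>e. of_int (f e)) (heavy_orientation ori2)"
      using \<open>balanced_orientation V (sq_edges E c l) _ _ ori2\<close> sq_iff unfolding f_def by blast
    then have "is_circulation V E (otail ends (heavy_orientation ori2)) (ohead ends (heavy_orientation ori2)) f"
      using bounds by (simp add: is_circulation_iff_balanced)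
    then show ?thesis using bounds by blast
  qed
qed

end
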